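(* Let $k$ be a field, $S=k[x_1,x_2,x_3,x_4]$, and let $M\subseteq S$ be a monomial ideal minimally generated by monomials $m_1,\dots,m_q$ with $q\ge 2$. Suppose there is an index $1\le k\le q$ such that $m_k\mid\operatorname{lcm}(m_i,m_j)$ for all $i\ne j$. Then $\operatorname{pd}(S/M)=2$.
   Context: $\operatorname{pd}(S/M)$ denotes the projective dimension of $S/M$ as an $S$-module. *)

theory Defs
  imports Main "HOL-Library.Poly_Mapping" "HOL-Library.Numeral_Type"
begin

text \<open>The polynomial ring S = k[x_1,x_2,x_3,x_4]: finitely supported functions from
  exponent vectors (indexed by the 4-element type) to coefficients in k.\<close>
type_synonym 'k poly4 = "(4 \<Rightarrow>\<^sub>0 nat) \<Rightarrow>\<^sub>0 'k"

definition monom4 :: "(4 \<Rightarrow>\<^sub>0 nat) \<Rightarrow> 'k::field poly4" where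
  "monom4 a = Poly_Mapping.single a 1"

definition exp_lcm :: "(4 \<Rightarrow>\<^sub>0 nat) \<Rightarrow> (4 \<Rightarrow>\<^sub>0 nat) \<Rightarrow> (4 \<Rightarrow>\<^sub>0 nat)" where
  "exp_lcm a b = Abs_poly_mapping (\<lambda>v. max (Poly_Mapping.lookup a v) (Poly_Mapping.lookup b v))"

definition ideal_gen :: "'k::field poly4 set \<Rightarrow> 'k poly4 set" where
  "ideal_gen G = {x. \<exists>F c. finite F \<and> F \<subseteq> G \<and> x = (\<Sum>g\<in>F. c g * g)}"

text \<open>Free S-module with basis indexed by nat (elements: finitely supported vectors).\<close>
type_synonym 'k freeS = "nat \<Rightarrow>\<^sub>0 'k poly4"

definition smultF :: "'k::field poly4 \<Rightarrow> 'k freeS \<Rightarrow> 'k freeS" where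
  "smultF s v = Poly_Mapping.map (\<lambda>x. s * x) v"

definition S_linear :: "('k::field freeS \<Rightarrow> 'k freeS) \<Rightarrow> bool" where
  "S_linear f \<longleftrightarrow> (\<forall>u v. f (u + v) = f u + f v) \<and> (\<forall>s v. f (smultF s v) = smultF s (f v))"

definition S_linear_to_S :: "('k::field freeS \<Rightarrow> 'k poly4) \<Rightarrow> bool" where
  "S_linear_to_S f \<longleftrightarrow> (\<forall>u v. f (u + v) = f u + f v) \<and> (\<forall>s v. f (smultF s v) = s * f v)"

text \<open>Projective module: a direct summand of a free module, i.e. the image of an
  S-linear idempotent endomorphism of the free module.\<close>
definition projective_sub :: "'k::field freeS set \<Rightarrow> bool" where
  "projective_sub P \<longleftrightarrow> (\<exists>e. S_linear e \<and> (\<forall>v. e (e v) = e v) \<and> P = range e)"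

text \<open>A projective resolution of length (at most) n of S/M:
  0 \<rightarrow> P_n \<rightarrow> ... \<rightarrow> P_1 \<rightarrow> P_0 \<rightarrow> S/M \<rightarrow> 0, with augmentation induced by eps.\<close>
definition proj_resolution ::
  "'k::field poly4 set \<Rightarrow> nat \<Rightarrow> (nat \<Rightarrow> 'k freeS set) \<Rightarrow> (nat \<Rightarrow> 'k freeS \<Rightarrow> 'k freeS)
     \<Rightarrow> ('k freeS \<Rightarrow> 'k poly4) \<Rightarrow> bool" where
  "proj_resolution M n P d eps \<longleftrightarrow>
     (\<forall>i. projective_sub (P i)) \<and> (\<forall>i>n. P i = {0}) \<and>
     (\<forall>i\<ge>1. S_linear (d i) \<and> d i ` P i \<subseteq> P (i - 1)) \<and>
     S_linear_to_S eps \<and>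
     (\<forall>s. \<exists>p\<in>P 0. s - eps p \<in> M) \<and>
     {p \<in> P 0. eps p \<in> M} = d 1 ` P 1 \<and>
     (\<forall>i\<ge>1. {p \<in> P i. d i p = 0} = d (Suc i) ` P (Suc i))"

definition pd_quot :: "'k::field poly4 set \<Rightarrow> nat" where
  "pd_quot M = (LEAST n. \<exists>P d eps. proj_resolution M n P d eps)"

end

theory Submission
  imports Defs "HOL.Modules"
begin

text \<open>If \<open>S/M\<close> had a projective resolution of length at most one, its first map \<open>d\<^sub>1\<close> would be
  injective. Take \<open>p \<in> P\<^sub>0\<close> lifting \<open>1\<close> and lifts \<open>y\<^sub>1, y\<^sub>2 \<in> P\<^sub>1\<close> of \<open>m\<^sub>1 p, m\<^sub>2 p\<close>. With
  \<open>L = lcm(m\<^sub>1, m\<^sub>2)\<close>, injectivity turns the Koszul relation into \<open>(L/m\<^sub>1) y\<^sub>1 = (L/m\<^sub>2) y\<^sub>2\<close>;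
  the two cofactors are coprime monomials, so \<open>y\<^sub>1 = (L/m\<^sub>2) z\<close>, and \<open>z\<close> lifts \<open>gcd(m\<^sub>1, m\<^sub>2) p\<close>.
  Hence \<open>gcd(m\<^sub>1, m\<^sub>2) \<in> M\<close>, contradicting minimality of the generators.

  Conversely \<open>0 \<rightarrow> S\<^bsup>q-1\<^esup> \<rightarrow> S\<^bsup>q\<^esup> \<rightarrow> S \<rightarrow> S/M \<rightarrow> 0\<close> is exact, where \<open>e\<^sub>i \<mapsto> m\<^sub>i\<close> and, for
  \<open>i \<noteq> k\<close>, \<open>e\<^sub>i \<mapsto> (L\<^sub>i/m\<^sub>i) e\<^sub>i - (L\<^sub>i/m\<^sub>k) e\<^sub>k\<close> with \<open>L\<^sub>i = lcm(m\<^sub>k, m\<^sub>i)\<close>. In a syzygy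
  \<open>\<Sum> c\<^sub>i e\<^sub>i\<close> every term \<open>x\<^sup>b\<close> of \<open>c\<^sub>i\<close> is divisible by \<open>L\<^sub>i/m\<^sub>i\<close>: otherwise \<open>m\<^sub>k\<close> does not divide
  \<open>x\<^sup>b m\<^sub>i\<close>, hence, as \<open>m\<^sub>k\<close> divides every \<open>lcm(m\<^sub>i, m\<^sub>j)\<close>, neither does any other \<open>m\<^sub>j\<close>, and the
  term could not cancel. Subtracting the matching combination of the syzygies \<open>d\<^sub>2 e\<^sub>i\<close> leaves a
  syzygy supported on \<open>e\<^sub>k\<close> alone, which is zero; \<open>d\<^sub>2\<close> is injective as its \<open>e\<^sub>i\<close>-coordinates show.\<close>

abbreviation lookup :: "('a \<Rightarrow>\<^sub>0 'b::zero) \<Rightarrow> 'a \<Rightarrow> 'b"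
  where "lookup \<equiv> Poly_Mapping.lookup"

section \<open>Monomials\<close>

lemma lookup_exp_lcm [simp]: "lookup (exp_lcm a b) v = max (lookup a v) (lookup b v)"
  by (simp add: exp_lcm_def)

definition exp_gcd :: "(4 \<Rightarrow>\<^sub>0 nat) \<Rightarrow> (4 \<Rightarrow>\<^sub>0 nat) \<Rightarrow> (4 \<Rightarrow>\<^sub>0 nat)" where
  "exp_gcd a b = Abs_poly_mapping (\<lambda>v. min (lookup a v) (lookup b v))"

lemma lookup_exp_gcd [simp]: "lookup (exp_gcd a b) v = min (lookup a v) (lookup b v)"
  by (simp add: exp_gcd_def)

text \<open>Monomials are ordered by divisibility through the pointwise order \<open>lookup a \<le> lookup b\<close>
  of their exponents; \<open>a - b\<close> is truncated pointwise subtraction, the exponent of the quotient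
  when \<open>lookup b \<le> lookup a\<close>.\<close>

lemma exp_sub_add_cancel [simp]: "lookup b \<le> lookup a \<Longrightarrow> a - b + b = (a :: 'v \<Rightarrow>\<^sub>0 nat)"
  by (simp add: poly_mapping_eq_iff fun_eq_iff le_fun_def lookup_add lookup_minus)

lemma lookup_single_mult:
  fixes f :: "('v \<Rightarrow>\<^sub>0 nat) \<Rightarrow>\<^sub>0 'k::comm_semiring_1"
  shows "lookup (Poly_Mapping.single a c * f) e
           = (if lookup a \<le> lookup e then c * lookup f (e - a) else 0)"
proof -
  have split: "e = a + b \<longleftrightarrow> lookup a \<le> lookup e \<and> b = e - a" for b
    by (auto simp: poly_mapping_eq_iff fun_eq_iff le_fun_def lookup_add lookup_minus)
  have "lookup (Poly_Mapping.single a c * f) e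
          = (\<Sum>l. lookup (Poly_Mapping.single a c) l * (\<Sum>b. lookup f b when e = l + b))"
    by (rule lookup_mult)
  also have "\<dots> = (\<Sum>l. c * (\<Sum>b. lookup f b when e = l + b) when l = a)"
    by (rule Sum_any.cong) (simp add: lookup_single when_def)
  also have "\<dots> = c * (\<Sum>b. lookup f b when e = a + b)"
    by simp
  also have "\<dots> = (if lookup a \<le> lookup e then c * lookup f (e - a) else 0)"
    by (simp add: split when_def)
  finally show ?thesis .
qed

lemma lookup_monom4_mult:
  fixes f :: "'k::field poly4"
  shows "lookup (monom4 a * f) e = (if lookup a \<le> lookup e then lookup f (e - a) else 0)"
  by (simp add: monom4_def lookup_single_mult)

lemma lookup_monom4_mult_add [simp]:
  fixes f :: "'k::field poly4"
  shows "lookup (monom4 a * f) (a + b) = lookup f b"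
  by (simp add: lookup_monom4_mult le_fun_def lookup_add)

lemma monom4_mult: "monom4 a * monom4 b = (monom4 (a + b) :: 'k::field poly4)"
  by (simp add: monom4_def mult_single)

lemma monom4_nonzero [simp]: "monom4 a \<noteq> (0 :: 'k::field poly4)"
  by (metis monom4_def lookup_single_eq lookup_zero one_neq_zero)

lemma monom4_dvdI:
  fixes f :: "'k::field poly4"
  assumes "\<And>e. lookup f e \<noteq> 0 \<Longrightarrow> lookup u \<le> lookup e"
  shows "monom4 u dvd f"
proof
  define g :: "'k poly4" where "g = Abs_poly_mapping (\<lambda>b. lookup f (u + b))"
  have "finite ((+) u -` Poly_Mapping.keys f)"
    by (rule finite_vimageI) (auto simp: inj_on_def)
  then have lookup_g: "lookup g b = lookup f (u + b)" for b
    by (simp add: g_def vimage_def in_keys_iff)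
  show "f = monom4 u * g"
  proof (rule poly_mapping_eqI)
    fix e
    show "lookup f e = lookup (monom4 u * g) e"
      using assms[of e]
      by (auto simp: lookup_monom4_mult lookup_g le_fun_def lookup_add lookup_minus
               intro!: arg_cong[where f = "lookup f"] poly_mapping_eqI)
  qed
qed

lemma monom4_dvd_monom4_iff:
  "(monom4 a :: 'k::field poly4) dvd monom4 b \<longleftrightarrow> lookup a \<le> lookup b"
proof
  assume "monom4 a dvd (monom4 b :: 'k poly4)"
  then obtain g :: "'k poly4" where "monom4 b = monom4 a * g" by (elim dvdE)
  moreover have "lookup (monom4 b :: 'k poly4) b = 1" by (simp add: monom4_def)
  ultimately show "lookup a \<le> lookup b"
    by (metis lookup_monom4_mult zero_neq_one)
next
  assume "lookup a \<le> lookup b"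
  then show "(monom4 a :: 'k poly4) dvd monom4 b"
    by (intro monom4_dvdI) (auto simp: monom4_def lookup_single when_def split: if_splits)
qed

lemma monom4_dvd_of_coprime:
  fixes f h :: "'k::field poly4"
  assumes eq: "monom4 u1 * f = monom4 u2 * h"
    and coprime: "\<And>v. lookup u1 v = 0 \<or> lookup u2 v = 0"
  shows "monom4 u2 dvd f"
proof (rule monom4_dvdI)
  fix b assume "lookup f b \<noteq> 0"
  then have "lookup (monom4 u2 * h) (u1 + b) \<noteq> 0" by (simp flip: eq)
  then have le: "lookup u2 v \<le> lookup u1 v + lookup b v" for v
    by (auto simp: lookup_monom4_mult le_fun_def lookup_add split: if_splits)
  show "lookup u2 \<le> lookup b"
  proof (rule le_funI)
    fix v show "lookup u2 v \<le> lookup b v" using le[of v] coprime[of v] by auto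
  qed
qed

section \<open>Monomial ideals\<close>

interpretation ring_module: module "(*) :: 'a::comm_ring_1 \<Rightarrow> 'a \<Rightarrow> 'a"
  by standard (simp_all add: algebra_simps)

lemma ideal_gen_eq_span: "ideal_gen G = ring_module.span G"
  by (auto simp: ideal_gen_def ring_module.span_explicit)

lemma ideal_gen_image_finite:
  assumes "finite I"
  shows "x \<in> ideal_gen (f ` I) \<longleftrightarrow> (\<exists>c. x = (\<Sum>i\<in>I. c i * f i))"
proof
  assume "x \<in> ideal_gen (f ` I)"
  then show "\<exists>c. x = (\<Sum>i\<in>I. c i * f i)"
    unfolding ideal_gen_eq_span
  proof (induction x rule: ring_module.span_induct_alt)
    case base
    show ?case by (auto intro: exI[of _ "\<lambda>_. 0"])
  next
    case (step r g y)
    then obtain j c where "j \<in> I" "g = f j" "y = (\<Sum>i\<in>I. c i * f i)" by blast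
    then have "r * g + y = (\<Sum>i\<in>I. (c i + (if i = j then r else 0)) * f i)"
      using assms by (simp add: distrib_right sum.distrib if_distrib[of "\<lambda>x. x * _"] add.commute)
    then show ?case by (rule exI[where x = "\<lambda>i. c i + (if i = j then r else 0)"])
  qed
next
  assume "\<exists>c. x = (\<Sum>i\<in>I. c i * f i)"
  then show "x \<in> ideal_gen (f ` I)"
    unfolding ideal_gen_eq_span
    by (auto intro!: ring_module.span_sum ring_module.span_scale intro: ring_module.span_base)
qed

lemma monomial_ideal_term_dvd:
  fixes f :: "'k::field poly4"
  assumes "f \<in> ideal_gen ((\<lambda>i. monom4 (a i)) ` S)" and "lookup f c \<noteq> 0"
  shows "\<exists>i\<in>S. lookup (a i) \<le> lookup c"
  using assms unfolding ideal_gen_eq_span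
proof (induction f rule: ring_module.span_induct_alt)
  case (step r g f)
  then obtain i where i: "i \<in> S" "g = monom4 (a i)" by blast
  show ?case
  proof (cases "lookup (monom4 (a i) * r) c = 0")
    case True
    then have "lookup f c \<noteq> 0" using step.prems i by (simp add: lookup_add mult.commute)
    then show ?thesis using step.IH by blast
  next
    case False
    then show ?thesis using i by (auto simp: lookup_monom4_mult split: if_splits)
  qed
qed simp

lemma monom4_in_monomial_ideal_iff:
  "(monom4 c :: 'k::field poly4) \<in> ideal_gen ((\<lambda>i. monom4 (a i)) ` S)
     \<longleftrightarrow> (\<exists>i\<in>S. lookup (a i) \<le> lookup c)"
proof
  assume "(monom4 c :: 'k poly4) \<in> ideal_gen ((\<lambda>i. monom4 (a i)) ` S)"
  then show "\<exists>i\<in>S. lookup (a i) \<le> lookup c"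
    by (rule monomial_ideal_term_dvd) (simp add: monom4_def)
next
  assume "\<exists>i\<in>S. lookup (a i) \<le> lookup c"
  then obtain i where i: "i \<in> S" "lookup (a i) \<le> lookup c" by blast
  then have "monom4 c = monom4 (c - a i) * (monom4 (a i) :: 'k poly4)"
    by (simp add: monom4_mult)
  moreover have "monom4 (a i) \<in> ring_module.span ((\<lambda>i. monom4 (a i) :: 'k poly4) ` S)"
    using i(1) by (simp add: ring_module.span_base)
  ultimately show "(monom4 c :: 'k poly4) \<in> ideal_gen ((\<lambda>i. monom4 (a i)) ` S)"
    unfolding ideal_gen_eq_span by (metis ring_module.span_scale)
qed

lemma minimal_generators_incomparable:
  fixes a :: "nat \<Rightarrow> (4 \<Rightarrow>\<^sub>0 nat)"
  assumes "\<forall>j\<in>S. (monom4 (a j) :: 'k::field poly4) \<notin> ideal_gen ((\<lambda>i. monom4 (a i)) ` (S - {j}))"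
    and "i \<in> S" "j \<in> S" "i \<noteq> j"
  shows "\<not> lookup (a i) \<le> lookup (a j)"
  using assms by (auto simp: monom4_in_monomial_ideal_iff)

section \<open>Free modules and their projective summands\<close>

lemma lookup_smultF [simp]: "lookup (smultF s v) n = s * lookup v n"
  by (simp add: smultF_def Poly_Mapping.map.rep_eq when_def)

lemma smultF_zero_right [simp]: "smultF s 0 = 0"
  by (rule poly_mapping_eqI) simp

lemma smultF_single: "smultF s (Poly_Mapping.single i x) = Poly_Mapping.single i (s * x)"
  by (rule poly_mapping_eqI) (simp add: lookup_single when_def)

lemma smultF_smultF [simp]: "smultF s (smultF t v) = smultF (s * t) v"
  by (rule poly_mapping_eqI) (simp only: lookup_smultF mult.assoc)

lemma smultF_add_left: "smultF (s + t) v = smultF s v + smultF t v"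
  by (rule poly_mapping_eqI) (simp add: lookup_add distrib_right)

lemma smultF_sum_right: "smultF s (\<Sum>i\<in>I. v i) = (\<Sum>i\<in>I. smultF s (v i))"
  by (rule poly_mapping_eqI) (simp add: lookup_sum sum_distrib_left)

lemma smultF_monom4_cancel [simp]:
  "smultF (monom4 u) x = smultF (monom4 u :: 'k::field poly4) y \<longleftrightarrow> x = y"
proof
  assume "smultF (monom4 u) x = smultF (monom4 u) y"
  then have "monom4 u * lookup x n = monom4 u * lookup y n" for n
    by (metis lookup_smultF)
  then show "x = y" by (auto intro: poly_mapping_eqI)
qed simp

lemma freeS_divide_coordinates:
  fixes y :: "'k::field freeS"
  assumes "\<And>n. n \<in> A \<Longrightarrow> monom4 (u n) dvd lookup y n"
  shows "\<exists>z. Poly_Mapping.keys z \<subseteq> A \<and> (\<forall>n\<in>A. lookup y n = monom4 (u n) * lookup z n)"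
proof -
  have "\<forall>n\<in>A. \<exists>g. lookup y n = monom4 (u n) * g"
    using assms by (auto simp: dvd_def)
  then obtain g where g: "\<And>n. n \<in> A \<Longrightarrow> lookup y n = monom4 (u n) * g n"
    by (auto dest!: bchoice)
  define z :: "'k freeS" where
    "z = Abs_poly_mapping (\<lambda>n. if n \<in> A \<and> lookup y n \<noteq> 0 then g n else 0)"
  have "finite {n. (if n \<in> A \<and> lookup y n \<noteq> 0 then g n else 0) \<noteq> 0}"
    by (rule finite_subset[of _ "Poly_Mapping.keys y"]) (auto simp: in_keys_iff)
  then have "lookup z n = (if n \<in> A \<and> lookup y n \<noteq> 0 then g n else 0)" for n
    by (simp add: z_def)
  then show ?thesis
    using g by (auto intro!: exI[of _ z] simp: in_keys_iff split: if_splits)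
qed

lemma S_linear_zero: "S_linear f \<Longrightarrow> f 0 = 0"
  unfolding S_linear_def by (metis add_cancel_right_right)

lemma S_linear_smultF: "S_linear f \<Longrightarrow> f (smultF s v) = smultF s (f v)"
  unfolding S_linear_def by blast

lemma S_linear_diff: "S_linear f \<Longrightarrow> f (u - v) = f u - f v"
  unfolding S_linear_def by (metis add_diff_cancel_right' diff_add_cancel)

lemma S_linear_sum: "S_linear f \<Longrightarrow> f (\<Sum>i\<in>I. v i) = (\<Sum>i\<in>I. f (v i))"
  by (induction I rule: infinite_finite_induct) (auto simp: S_linear_def S_linear_zero)

lemma S_linear_combination:
  "S_linear (\<lambda>v. \<Sum>i\<in>I. smultF (lookup v i) (w i) :: 'k::field freeS)"
  unfolding S_linear_def
  by (simp add: lookup_add smultF_add_left sum.distrib smultF_sum_right)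

lemma S_linear_zero_map: "S_linear (\<lambda>_. 0 :: 'k::field freeS)"
  by (simp add: S_linear_def)

lemma projective_sub_diff:
  assumes "projective_sub P" "x \<in> P" "y \<in> P" shows "x - y \<in> P"
proof -
  obtain e where e: "S_linear e" "P = range e" using assms(1) unfolding projective_sub_def by blast
  obtain x' y' where "x = e x'" "y = e y'" using assms(2,3) e(2) by blast
  then have "x - y = e (x' - y')" using e(1) by (simp add: S_linear_diff)
  then show ?thesis using e(2) by simp
qed

lemma projective_sub_smultF:
  assumes "projective_sub P" "x \<in> P" shows "smultF s x \<in> P"
proof -
  obtain e where e: "S_linear e" "P = range e" using assms(1) unfolding projective_sub_def by blast
  obtain x' where "x = e x'" using assms(2) e(2) by blast
  then have "smultF s x = e (smultF s x')" using e(1) by (simp add: S_linear_def)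
  then show ?thesis using e(2) by simp
qed

lemma projective_sub_smultF_monom4_cancel:
  fixes z :: "'k::field freeS"
  assumes "projective_sub P" "smultF (monom4 u) z \<in> P" shows "z \<in> P"
proof -
  obtain e where e: "S_linear e" "\<And>v. e (e v) = e v" "P = range e"
    using assms(1) unfolding projective_sub_def by blast
  then have "e (smultF (monom4 u) z) = smultF (monom4 u) z" using assms(2) by (metis rangeE)
  then have "e z = z" using e(1) by (simp add: S_linear_def)
  then show ?thesis using e(3) by (metis rangeI)
qed

definition freeS_on :: "nat set \<Rightarrow> 'k::field freeS set" where
  "freeS_on A = {v. Poly_Mapping.keys v \<subseteq> A}"

lemma mem_freeS_on_iff: "(v :: 'k::field freeS) \<in> freeS_on A \<longleftrightarrow> (\<forall>n. n \<notin> A \<longrightarrow> lookup v n = 0)"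
  by (auto simp: freeS_on_def in_keys_iff)

lemma freeS_on_empty [simp]: "freeS_on {} = {0}"
  by (auto simp: freeS_on_def)

lemma projective_sub_freeS_on: "projective_sub (freeS_on A :: 'k::field freeS set)"
proof -
  define e :: "'k freeS \<Rightarrow> 'k freeS" where
    "e v = Abs_poly_mapping (\<lambda>n. if n \<in> A then lookup v n else 0)" for v
  have lookup_e: "lookup (e v) n = (if n \<in> A then lookup v n else 0)" for v n
  proof -
    have "finite {n. (if n \<in> A then lookup v n else 0) \<noteq> 0}"
      by (rule finite_subset[of _ "Poly_Mapping.keys v"]) (auto simp: in_keys_iff)
    then show ?thesis by (simp add: e_def)
  qed
  have "S_linear e"
    by (auto simp: S_linear_def lookup_e lookup_add intro!: poly_mapping_eqI)
  moreover have "e (e v) = e v" for v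
    by (rule poly_mapping_eqI) (simp add: lookup_e)
  moreover have "freeS_on A = range e"
  proof (intro equalityI subsetI)
    fix v :: "'k freeS" assume "v \<in> freeS_on A"
    then have "v = e v" by (intro poly_mapping_eqI) (auto simp: lookup_e mem_freeS_on_iff)
    then show "v \<in> range e" by blast
  qed (auto simp: mem_freeS_on_iff lookup_e)
  ultimately show ?thesis unfolding projective_sub_def by blast
qed

section \<open>Resolutions of length at most one\<close>

lemma proj_resolutionD:
  assumes "proj_resolution M n P d eps"
  shows "\<And>i. projective_sub (P i)" "\<And>i. i > n \<Longrightarrow> P i = {0}"
    and "\<And>i. i \<ge> 1 \<Longrightarrow> S_linear (d i)" "S_linear_to_S eps"
    and "\<And>s. \<exists>p\<in>P 0. s - eps p \<in> M" "{p \<in> P 0. eps p \<in> M} = d 1 ` P 1"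
    and "\<And>i. i \<ge> 1 \<Longrightarrow> {p \<in> P i. d i p = 0} = d (Suc i) ` P (Suc i)"
  using assms unfolding proj_resolution_def by auto

lemma proj_resolution_cyclic_generator:
  assumes res: "proj_resolution (ideal_gen G) n P d eps"
  obtains p where "p \<in> P 0" "\<And>s. s \<in> ideal_gen G \<longleftrightarrow> smultF s p \<in> d 1 ` P 1"
proof -
  note eps = proj_resolutionD(4)[OF res] and P0 = proj_resolutionD(1)[OF res, of 0]
    and image_d1 = proj_resolutionD(6)[OF res]
  obtain p where p: "p \<in> P 0" and X: "1 - eps p \<in> ideal_gen G"
    using proj_resolutionD(5)[OF res, of 1] by blast
  have "s \<in> ideal_gen G \<longleftrightarrow> smultF s p \<in> d 1 ` P 1" for s
  proof -
    have X': "s * (1 - eps p) \<in> ideal_gen G"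
      using X unfolding ideal_gen_eq_span by (rule ring_module.span_scale)
    have "s \<in> ideal_gen G \<longleftrightarrow> s * eps p \<in> ideal_gen G"
    proof
      assume "s \<in> ideal_gen G"
      then have "s - s * (1 - eps p) \<in> ideal_gen G"
        using X' unfolding ideal_gen_eq_span by (rule ring_module.span_diff)
      then show "s * eps p \<in> ideal_gen G" by (simp add: right_diff_distrib)
    next
      assume "s * eps p \<in> ideal_gen G"
      then have "s * (1 - eps p) + s * eps p \<in> ideal_gen G"
        using X' unfolding ideal_gen_eq_span by (intro ring_module.span_add)
      then show "s \<in> ideal_gen G" by (simp add: right_diff_distrib)
    qed
    also have "\<dots> \<longleftrightarrow> smultF s p \<in> {p \<in> P 0. eps p \<in> ideal_gen G}"
      using eps projective_sub_smultF[OF P0 p] by (simp add: S_linear_to_S_def)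
    also have "\<dots> \<longleftrightarrow> smultF s p \<in> d 1 ` P 1" by (simp only: image_d1)
    finally show ?thesis .
  qed
  with p show thesis by (rule that)
qed

lemma proj_resolution_first_map_inj:
  assumes res: "proj_resolution M n P d eps" and "n \<le> 1" and "x \<in> P 1" "d 1 x = 0"
  shows "x = 0"
proof -
  have "P 2 = {0}" "S_linear (d 2)" "{p \<in> P 1. d 1 p = 0} = d 2 ` P 2"
    using proj_resolutionD(2,3,7)[OF res] \<open>n \<le> 1\<close> by (simp_all add: numeral_2_eq_2)
  with assms(3,4) show ?thesis by (auto simp: S_linear_zero)
qed

lemma monom4_gcd_mem_of_proj_resolution:
  fixes b1 b2 :: "4 \<Rightarrow>\<^sub>0 nat" and G :: "'k::field poly4 set"
  assumes res: "proj_resolution (ideal_gen G) n P d eps" and "n \<le> 1"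
    and mem: "monom4 b1 \<in> ideal_gen G" "monom4 b2 \<in> ideal_gen G"
  shows "monom4 (exp_gcd b1 b2) \<in> ideal_gen G"
proof -
  obtain p where p: "p \<in> P 0" and gen: "\<And>s. s \<in> ideal_gen G \<longleftrightarrow> smultF s p \<in> d 1 ` P 1"
    using proj_resolution_cyclic_generator[OF res] by blast
  note P1 = proj_resolutionD(1)[OF res, of 1] and d1 = proj_resolutionD(3)[OF res, of 1]
  obtain y1 y2 where y: "y1 \<in> P 1" "d 1 y1 = smultF (monom4 b1) p"
    "y2 \<in> P 1" "d 1 y2 = smultF (monom4 b2) p"
    using mem gen by (metis imageE)
  define u1 u2 where "u1 = exp_lcm b1 b2 - b1" and "u2 = exp_lcm b1 b2 - b2"
  have "u1 + b1 = exp_lcm b1 b2" "u2 + b2 = exp_lcm b1 b2" "u2 + exp_gcd b1 b2 = b1"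
    by (simp_all add: u1_def u2_def poly_mapping_eq_iff fun_eq_iff lookup_add lookup_minus
                      max_def min_def)
  then have m1: "monom4 u1 * monom4 b1 = (monom4 (exp_lcm b1 b2) :: 'k poly4)"
    and m2: "monom4 u2 * monom4 b2 = (monom4 (exp_lcm b1 b2) :: 'k poly4)"
    and m3: "monom4 u2 * monom4 (exp_gcd b1 b2) = (monom4 b1 :: 'k poly4)"
    by (simp_all add: monom4_mult)
  have coprime: "lookup u1 v = 0 \<or> lookup u2 v = 0" for v
    by (auto simp: u1_def u2_def lookup_minus)
  \<comment> \<open>lift the Koszul syzygy of the two generators to P 1, where d 1 is injective\<close>
  let ?w = "smultF (monom4 u1) y1 - smultF (monom4 u2) y2"
  have "?w \<in> P 1" using P1 y by (simp add: projective_sub_diff projective_sub_smultF)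
  moreover have "d 1 ?w = 0"
    using d1 y m1 m2 by (simp add: S_linear_diff S_linear_def)
  ultimately have "?w = 0" by (rule proj_resolution_first_map_inj[OF res \<open>n \<le> 1\<close>])
  then have "smultF (monom4 u1) y1 = smultF (monom4 u2) y2" by simp
  then have "monom4 u1 * lookup y1 i = monom4 u2 * lookup y2 i" for i
    by (metis lookup_smultF)
  then have "monom4 u2 dvd lookup y1 i" for i
    using coprime by (rule monom4_dvd_of_coprime)
  then obtain z where "\<forall>i. lookup y1 i = monom4 u2 * lookup z i"
    using freeS_divide_coordinates[of UNIV "\<lambda>_. u2" y1] by auto
  then have z: "y1 = smultF (monom4 u2) z" by (auto intro: poly_mapping_eqI)
  have "z \<in> P 1" using P1 y(1) z by (metis projective_sub_smultF_monom4_cancel)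
  moreover have "smultF (monom4 (exp_gcd b1 b2)) p = d 1 z"
  proof -
    have "smultF (monom4 u2) (d 1 z) = smultF (monom4 u2) (smultF (monom4 (exp_gcd b1 b2)) p)"
      using d1 y(2) m3 by (simp add: z S_linear_def del: smultF_monom4_cancel)
    then show ?thesis by (simp only: smultF_monom4_cancel)
  qed
  ultimately have "smultF (monom4 (exp_gcd b1 b2)) p \<in> d 1 ` P 1" by (rule rev_image_eqI)
  then show ?thesis by (simp only: gen)
qed

lemma proj_resolution_length_ge_2:
  fixes a :: "nat \<Rightarrow> (4 \<Rightarrow>\<^sub>0 nat)" and M :: "'k::field poly4 set"
  assumes "q \<ge> 2"
    and M: "M = ideal_gen ((\<lambda>i. monom4 (a i)) ` {1..q})"
    and minimal: "\<forall>j\<in>{1..q}. (monom4 (a j) :: 'k poly4) \<notin> ideal_gen ((\<lambda>i. monom4 (a i)) ` ({1..q} - {j}))"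
    and res: "proj_resolution M n P d eps"
  shows "2 \<le> n"
proof (rule ccontr)
  assume "\<not> 2 \<le> n"
  have "{1, 2} \<subseteq> {1..q}" using \<open>q \<ge> 2\<close> by auto
  then have "monom4 (a 1) \<in> M" "monom4 (a 2) \<in> M"
    unfolding M by (auto simp: monom4_in_monomial_ideal_iff)
  then have "monom4 (exp_gcd (a 1) (a 2)) \<in> M"
    using res \<open>\<not> 2 \<le> n\<close> unfolding M by (intro monom4_gcd_mem_of_proj_resolution) auto
  then obtain i where i: "i \<in> {1..q}" "lookup (a i) \<le> lookup (exp_gcd (a 1) (a 2))"
    unfolding M monom4_in_monomial_ideal_iff by blast
  obtain j where j: "j \<in> {1, 2}" "j \<noteq> i" by (cases "i = 1") auto
  then have "lookup (exp_gcd (a 1) (a 2)) \<le> lookup (a j)" by (auto simp: le_fun_def)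
  then have "lookup (a i) \<le> lookup (a j)" using i(2) by (rule order_trans[rotated])
  moreover have "j \<in> {1..q}" using j(1) \<open>{1, 2} \<subseteq> {1..q}\<close> by blast
  ultimately show False using minimal_generators_incomparable[OF minimal i(1) _ j(2)[symmetric]] by blast
qed

section \<open>A resolution of length two\<close>

definition gens_map :: "(nat \<Rightarrow> (4 \<Rightarrow>\<^sub>0 nat)) \<Rightarrow> nat \<Rightarrow> 'k::field freeS \<Rightarrow> 'k freeS" where
  "gens_map a q v = Poly_Mapping.single 0 (\<Sum>i\<in>{1..q}. lookup v i * monom4 (a i))"

definition syz_vec :: "(nat \<Rightarrow> (4 \<Rightarrow>\<^sub>0 nat)) \<Rightarrow> nat \<Rightarrow> nat \<Rightarrow> 'k::field freeS" where
  "syz_vec a k i = Poly_Mapping.single i (monom4 (exp_lcm (a k) (a i) - a i))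
                 - Poly_Mapping.single k (monom4 (exp_lcm (a k) (a i) - a k))"

definition syz_map :: "(nat \<Rightarrow> (4 \<Rightarrow>\<^sub>0 nat)) \<Rightarrow> nat \<Rightarrow> nat \<Rightarrow> 'k::field freeS \<Rightarrow> 'k freeS" where
  "syz_map a q k v = (\<Sum>i\<in>{1..q} - {k}. smultF (lookup v i) (syz_vec a k i))"

lemma lookup_gens_map:
  "lookup (gens_map a q v) n = (if n = 0 then \<Sum>i\<in>{1..q}. lookup v i * monom4 (a i) else 0)"
  by (simp add: gens_map_def lookup_single)

lemma gens_map_eq_0_iff:
  "gens_map a q v = 0 \<longleftrightarrow> (\<Sum>i\<in>{1..q}. lookup v i * monom4 (a i)) = 0"
proof
  assume "gens_map a q v = 0"
  then have "lookup (gens_map a q v) 0 = 0" by simp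
  then show "(\<Sum>i\<in>{1..q}. lookup v i * monom4 (a i)) = 0" by (simp add: lookup_gens_map)
qed (simp add: gens_map_def)

lemma S_linear_gens_map: "S_linear (gens_map a q :: 'k::field freeS \<Rightarrow> 'k freeS)"
proof -
  have "gens_map a q (smultF s v) = smultF s (gens_map a q v)" for s and v :: "'k freeS"
  proof -
    have "(\<Sum>i\<in>{1..q}. lookup (smultF s v) i * monom4 (a i))
        = s * (\<Sum>i\<in>{1..q}. lookup v i * monom4 (a i))"
      by (simp only: lookup_smultF sum_distrib_left mult.assoc)
    then show ?thesis by (simp only: gens_map_def smultF_single)
  qed
  moreover have "gens_map a q (u + v) = gens_map a q u + gens_map a q v" for u v :: "'k freeS"
    by (simp add: gens_map_def lookup_add distrib_right sum.distrib single_add)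
  ultimately show ?thesis by (simp add: S_linear_def)
qed

lemma S_linear_syz_map: "S_linear (syz_map a q k)"
  unfolding syz_map_def[abs_def] by (rule S_linear_combination)

lemma lookup_syz_map:
  assumes "n \<noteq> k"
  shows "lookup (syz_map a q k v) n
           = (if n \<in> {1..q} then lookup v n * monom4 (exp_lcm (a k) (a n) - a n) else 0)"
proof -
  have col: "lookup v i * lookup (syz_vec a k i) n
      = (if i = n then lookup v i * monom4 (exp_lcm (a k) (a i) - a i) else 0)"
    for i using assms by (simp add: syz_vec_def lookup_minus lookup_single)
  have "lookup (syz_map a q k v) n
      = (\<Sum>i\<in>{1..q} - {k}. if i = n then lookup v i * monom4 (exp_lcm (a k) (a i) - a i) else 0)"
    by (simp add: syz_map_def lookup_sum col)
  also have "\<dots> = (if n \<in> {1..q} - {k} then lookup v n * monom4 (exp_lcm (a k) (a n) - a n) else 0)"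
    by (rule sum.delta) simp
  finally show ?thesis using assms by simp
qed

lemma monom4_lcm_quotient_mult:
  "monom4 (exp_lcm b c - b) * monom4 b = (monom4 (exp_lcm b c) :: 'k::field poly4)"
  "monom4 (exp_lcm b c - c) * monom4 c = (monom4 (exp_lcm b c) :: 'k::field poly4)"
  by (simp_all add: monom4_mult le_fun_def)

lemma gens_map_syz_vec:
  assumes "i \<in> {1..q}" "k \<in> {1..q}"
  shows "gens_map a q (syz_vec a k i) = (0 :: 'k::field freeS)"
proof (cases "i = k")
  case True
  then show ?thesis by (simp add: syz_vec_def gens_map_def)
next
  case False
  have "lookup (syz_vec a k i) j = (0 :: 'k poly4)" if "j \<notin> {i, k}" for j
    using that by (simp add: syz_vec_def lookup_minus lookup_single)
  then have "(\<Sum>j\<in>{1..q}. lookup (syz_vec a k i) j * monom4 (a j))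
      = (\<Sum>j\<in>{i, k}. lookup (syz_vec a k i) j * (monom4 (a j) :: 'k poly4))"
    using assms by (intro sum.mono_neutral_right) auto
  also have "\<dots> = monom4 (exp_lcm (a k) (a i) - a i) * monom4 (a i)
                   - monom4 (exp_lcm (a k) (a i) - a k) * monom4 (a k)"
    using False by (simp add: syz_vec_def lookup_minus lookup_single)
  also have "\<dots> = 0" by (simp add: monom4_lcm_quotient_mult)
  finally show ?thesis by (simp add: gens_map_def)
qed

lemma gens_map_syz_map:
  assumes "k \<in> {1..q}"
  shows "gens_map a q (syz_map a q k v) = (0 :: 'k::field freeS)"
proof -
  have "gens_map a q (syz_map a q k v)
      = (\<Sum>i\<in>{1..q} - {k}. gens_map a q (smultF (lookup v i) (syz_vec a k i)))"
    unfolding syz_map_def by (rule S_linear_sum[OF S_linear_gens_map])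
  also have "\<dots> = (\<Sum>i\<in>{1..q} - {k}. smultF (lookup v i) (gens_map a q (syz_vec a k i)))"
    by (simp add: S_linear_smultF[OF S_linear_gens_map])
  also have "\<dots> = 0" using assms by (simp add: gens_map_syz_vec)
  finally show ?thesis .
qed

lemma syzygy_coeff_dvd:
  fixes v :: "'k::field freeS"
  assumes dom: "\<And>i j. i \<in> {1..q} \<Longrightarrow> j \<in> {1..q} \<Longrightarrow> i \<noteq> j \<Longrightarrow>
                  lookup (a k) \<le> lookup (exp_lcm (a i) (a j))"
    and syz: "(\<Sum>i\<in>{1..q}. lookup v i * monom4 (a i)) = 0"
    and n: "n \<in> {1..q}"
  shows "monom4 (exp_lcm (a k) (a n) - a n) dvd lookup v n"
proof (rule monom4_dvdI, rule ccontr)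
  fix b assume nz: "lookup (lookup v n) b \<noteq> 0"
    and not_dvd: "\<not> lookup (exp_lcm (a k) (a n) - a n) \<le> lookup b"
  \<comment> \<open>the term of exponent a n + b survives in the syzygy: no other generator reaches it\<close>
  define e where "e = a n + b"
  obtain x where "lookup b x < lookup (exp_lcm (a k) (a n) - a n) x"
    using not_dvd by (auto simp: le_fun_def not_le)
  then have "lookup e x < lookup (a k) x" by (simp add: e_def lookup_add lookup_minus)
  then have not_k: "\<not> lookup (a k) \<le> lookup e" by (auto simp: le_fun_def not_le)
  have other: "lookup (monom4 (a i) * lookup v i) e = 0" if "i \<in> {1..q} - {n}" for i
  proof -
    have "\<not> lookup (a i) \<le> lookup e"
    proof
      assume "lookup (a i) \<le> lookup e"
      moreover have "lookup (a n) \<le> lookup e" by (simp add: e_def le_fun_def lookup_add)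
      ultimately have "lookup (exp_lcm (a i) (a n)) \<le> lookup e" by (simp add: le_fun_def)
      moreover have "lookup (a k) \<le> lookup (exp_lcm (a i) (a n))" using dom that n by blast
      ultimately show False using not_k by (blast intro: order_trans)
    qed
    then show ?thesis by (simp add: lookup_monom4_mult)
  qed
  have "0 = (\<Sum>i\<in>{1..q}. lookup (monom4 (a i) * lookup v i) e)"
    using arg_cong[OF syz, of "\<lambda>f. lookup f e"] by (simp add: lookup_sum mult.commute)
  also have "\<dots> = lookup (monom4 (a n) * lookup v n) e"
    using n other by (simp add: sum.remove)
  also have "\<dots> = lookup (lookup v n) b" by (simp add: e_def)
  finally show False using nz by simp
qed

lemma gens_map_image:
  "gens_map a q ` freeS_on {1..q}
     = {p \<in> freeS_on {0}. lookup p 0 \<in> ideal_gen ((\<lambda>i. monom4 (a i)) ` {1..q})}"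
proof (intro equalityI subsetI)
  fix p :: "'k::field freeS"
  assume "p \<in> gens_map a q ` freeS_on {1..q}"
  then obtain v where p: "p = gens_map a q v" by blast
  then have "lookup p 0 \<in> ideal_gen ((\<lambda>i. monom4 (a i)) ` {1..q})"
    by (simp add: lookup_gens_map ideal_gen_image_finite exI[of _ "lookup v"])
  moreover have "p \<in> freeS_on {0}" by (simp add: p mem_freeS_on_iff lookup_gens_map)
  ultimately show "p \<in> {p \<in> freeS_on {0}. lookup p 0 \<in> ideal_gen ((\<lambda>i. monom4 (a i)) ` {1..q})}"
    by blast
next
  fix p :: "'k::field freeS"
  assume p: "p \<in> {p \<in> freeS_on {0}. lookup p 0 \<in> ideal_gen ((\<lambda>i. monom4 (a i)) ` {1..q})}"
  then obtain c where c: "lookup p 0 = (\<Sum>i\<in>{1..q}. c i * monom4 (a i))"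
    by (auto simp: ideal_gen_image_finite)
  define v :: "'k freeS" where "v = (\<Sum>j\<in>{1..q}. Poly_Mapping.single j (c j))"
  have lookup_v: "lookup v i = (if i \<in> {1..q} then c i else 0)" for i
    by (simp add: v_def lookup_sum lookup_single when_def)
  have "gens_map a q v = p"
    using p c by (intro poly_mapping_eqI) (auto simp: lookup_gens_map lookup_v mem_freeS_on_iff)
  moreover have "v \<in> freeS_on {1..q}" by (simp add: mem_freeS_on_iff lookup_v)
  ultimately show "p \<in> gens_map a q ` freeS_on {1..q}" by blast
qed

lemma gens_map_kernel:
  assumes k: "k \<in> {1..q}"
    and dom: "\<And>i j. i \<in> {1..q} \<Longrightarrow> j \<in> {1..q} \<Longrightarrow> i \<noteq> j \<Longrightarrow>
                lookup (a k) \<le> lookup (exp_lcm (a i) (a j))"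
  shows "{v \<in> freeS_on {1..q}. gens_map a q v = 0}
           = syz_map a q k ` (freeS_on ({1..q} - {k}) :: 'k::field freeS set)"
proof (intro equalityI subsetI)
  fix v :: "'k freeS" assume "v \<in> {v \<in> freeS_on {1..q}. gens_map a q v = 0}"
  then have v: "v \<in> freeS_on {1..q}" and syz: "gens_map a q v = 0" by auto
  have "(\<Sum>i\<in>{1..q}. lookup v i * monom4 (a i)) = 0"
    using syz by (simp add: gens_map_eq_0_iff)
  then have "monom4 (exp_lcm (a k) (a n) - a n) dvd lookup v n" if "n \<in> {1..q} - {k}" for n
    using that by (intro syzygy_coeff_dvd[where q = q and a = a and k = k, OF dom]) auto
  then obtain z where z: "Poly_Mapping.keys z \<subseteq> {1..q} - {k}"
    "\<forall>n\<in>{1..q} - {k}. lookup v n = monom4 (exp_lcm (a k) (a n) - a n) * lookup z n"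
    using freeS_divide_coordinates[of "{1..q} - {k}" "\<lambda>n. exp_lcm (a k) (a n) - a n" v] by blast
  \<comment> \<open>v - syz_map z is a syzygy supported on the k-th coordinate alone, hence zero\<close>
  define w where "w = v - syz_map a q k z"
  have w_off: "lookup w n = 0" if "n \<noteq> k" for n
    using that v z by (auto simp: w_def lookup_minus lookup_syz_map mem_freeS_on_iff mult.commute)
  have "gens_map a q w = 0"
    using syz gens_map_syz_map[OF k] by (simp add: w_def S_linear_diff[OF S_linear_gens_map])
  then have "(\<Sum>i\<in>{1..q}. lookup w i * monom4 (a i)) = 0" by (simp add: gens_map_eq_0_iff)
  then have "lookup w k * monom4 (a k) = 0"
    using k w_off by (simp add: sum.remove)
  then have "w = 0" using w_off by (intro poly_mapping_eqI) (metis lookup_zero mult_eq_0_iff monom4_nonzero)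
  then show "v \<in> syz_map a q k ` freeS_on ({1..q} - {k})"
    using z(1) by (auto simp: w_def freeS_on_def)
next
  fix v :: "'k freeS" assume "v \<in> syz_map a q k ` freeS_on ({1..q} - {k})"
  then obtain z where "v = syz_map a q k z" by blast
  moreover have "lookup (syz_map a q k z) n = 0" if "n \<notin> {1..q}" for n
    using that k by (metis lookup_syz_map)
  ultimately show "v \<in> {v \<in> freeS_on {1..q}. gens_map a q v = 0}"
    using gens_map_syz_map[OF k] by (auto simp: mem_freeS_on_iff)
qed

lemma syz_map_kernel:
  "{z \<in> freeS_on ({1..q} - {k}). syz_map a q k z = 0} = {0 :: 'k::field freeS}"
proof (intro equalityI subsetI)
  fix z :: "'k freeS" assume z: "z \<in> {z \<in> freeS_on ({1..q} - {k}). syz_map a q k z = 0}"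
  have "lookup z n = 0" for n
  proof (cases "n \<in> {1..q} - {k}")
    case True
    then have "lookup z n * monom4 (exp_lcm (a k) (a n) - a n) = 0"
      using z lookup_syz_map[of n k a q z] by auto
    then show ?thesis by simp
  qed (use z in \<open>auto simp: mem_freeS_on_iff\<close>)
  then show "z \<in> {0}" by (auto intro: poly_mapping_eqI)
qed (simp add: mem_freeS_on_iff S_linear_zero[OF S_linear_syz_map])

lemma proj_resolution_of_dominating_generator:
  fixes a :: "nat \<Rightarrow> (4 \<Rightarrow>\<^sub>0 nat)"
  assumes k: "k \<in> {1..q}"
    and dom: "\<And>i j. i \<in> {1..q} \<Longrightarrow> j \<in> {1..q} \<Longrightarrow> i \<noteq> j \<Longrightarrow>
                lookup (a k) \<le> lookup (exp_lcm (a i) (a j))"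
  shows "proj_resolution (ideal_gen ((\<lambda>i. monom4 (a i)) ` {1..q}) :: 'k::field poly4 set) 2
     (\<lambda>i. freeS_on (if i = 0 then {0} else if i = 1 then {1..q}
                     else if i = 2 then {1..q} - {k} else {}))
     (\<lambda>i. if i = 1 then gens_map a q else if i = 2 then syz_map a q k else (\<lambda>_. 0))
     (\<lambda>v. lookup v 0)"
    (is "proj_resolution ?M 2 ?P ?d _")
  unfolding proj_resolution_def
proof (intro conjI allI impI)
  have index_cases: "i = 1 \<or> i = 2 \<or> i > 2" if "1 \<le> i" for i :: nat
    using that by linarith
  have P: "?P 0 = freeS_on {0}" "?P 1 = freeS_on {1..q}" "?P 2 = freeS_on ({1..q} - {k})"
    and d: "?d 1 = gens_map a q" "?d 2 = syz_map a q k"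
    by simp_all
  have image_d1: "{p \<in> ?P 0. lookup p 0 \<in> ?M} = ?d 1 ` ?P 1"
    by (simp only: P d gens_map_image)
  have kernel_d1: "{p \<in> ?P 1. ?d 1 p = 0} = ?d 2 ` ?P 2"
    unfolding P d by (rule gens_map_kernel[where k = k and q = q and a = a, OF k dom])
  have kernel_d2: "{p \<in> ?P 2. ?d 2 p = 0} = {0}"
    by (simp only: P d syz_map_kernel)
  show "projective_sub (?P i)" for i by (rule projective_sub_freeS_on)
  show "?P i = {0}" if "2 < i" for i using that by simp
  show "S_linear (?d i)" if "1 \<le> i" for i
    using that by (simp add: S_linear_gens_map S_linear_syz_map S_linear_zero_map)
  show "?d i ` ?P i \<subseteq> ?P (i - 1)" if "1 \<le> i" for i
    using index_cases[OF that] image_d1 kernel_d1 by (elim disjE) (auto simp: freeS_on_def)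
  show "S_linear_to_S (\<lambda>v :: 'k freeS. lookup v 0)"
    by (simp add: S_linear_to_S_def lookup_add)
  show "\<exists>p\<in>?P 0. s - lookup p 0 \<in> ?M" for s
    by (intro bexI[of _ "Poly_Mapping.single 0 s"])
       (auto simp: mem_freeS_on_iff lookup_single ideal_gen_eq_span ring_module.span_zero)
  show "{p \<in> ?P 0. lookup p 0 \<in> ?M} = ?d 1 ` ?P 1" by (rule image_d1)
  show "{p \<in> ?P i. ?d i p = 0} = ?d (Suc i) ` ?P (Suc i)" if "1 \<le> i" for i
    using index_cases[OF that] kernel_d1 kernel_d2 by (elim disjE) (auto simp: numeral_2_eq_2)
qed

theorem theorem2:
  fixes a :: "nat \<Rightarrow> (4 \<Rightarrow>\<^sub>0 nat)" and q k :: nat and M :: "'f::field poly4 set"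
  assumes "q \<ge> 2"
    and "M = ideal_gen ((\<lambda>i. monom4 (a i)) ` {1..q})"
    and "\<forall>j\<in>{1..q}. (monom4 (a j) :: 'f poly4) \<notin> ideal_gen ((\<lambda>i. monom4 (a i)) ` ({1..q} - {j}))"
    and "1 \<le> k" and "k \<le> q"
    and "\<forall>i\<in>{1..q}. \<forall>j\<in>{1..q}. i \<noteq> j \<longrightarrow>
           (monom4 (a k) :: 'f poly4) dvd monom4 (exp_lcm (a i) (a j))"
  shows "pd_quot M = 2"
  unfolding pd_quot_def
proof (rule Least_equality)
  have "k \<in> {1..q}" using assms(4,5) by simp
  moreover have "lookup (a k) \<le> lookup (exp_lcm (a i) (a j))"
    if "i \<in> {1..q}" "j \<in> {1..q}" "i \<noteq> j" for i j
    using assms(6) that by (simp add: monom4_dvd_monom4_iff)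
  ultimately show "\<exists>P d eps. proj_resolution M 2 P d eps"
    using proj_resolution_of_dominating_generator[where 'k = 'f] assms(2) by blast
  show "2 \<le> n" if "\<exists>P d eps. proj_resolution M n P d eps" for n
    using that proj_resolution_length_ge_2[OF assms(1-3)] by blast
qed

end
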